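(* Let $f(x)=\frac1n\sum_{i=1}^nf_i(x)$ on $\mathbb{R}^d$, where each $f_i$ is convex and $L_i$-smooth, and let $x^*$ be a minimizer of $f$. Consider SGD with the SPS$^\ell_{\max}$ stepsize (defined in the context), and let $\alpha:=\min\{\frac1{2cL_{\max}},\gamma_b\}$ with $L_{\max}=\max_iL_i$. (i) If $c=1$, then for every $K\ge1$, $\mathbb{E}[f(\bar x^K)-f(x^* )]\le\frac{\|x^0-x^*\|^2}{\alpha K}+\frac{2\gamma_b\hat\sigma_B^2}{\alpha}$, where $\bar x^K=\frac1K\sum_{k=0}^{K-1}x^k$. (ii) If in addition $f$ is $\mu$-strongly convex and $c\ge1/2$, then for every $k\ge0$, $\mathbb{E}\|x^k-x^*\|^2\le(1-\mu\alpha)^k\|x^0-x^*\|^2+\frac{2\gamma_b\hat\sigma_B^2}{\mu\alpha}$.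
   Context: Minibatches: fix a batch size $B$; at each iteration a subset $\mathcal S_k\subseteq[n]$, $|\mathcal S_k|=B$, is sampled uniformly at random, independently across iterations. For $\mathcal S\subseteq[n]$, $f_{\mathcal S}:=\frac1{|\mathcal S|}\sum_{i\in\mathcal S}f_i$, $f^*_{\mathcal S}:=\inf_xf_{\mathcal S}(x)$ (assumed finite), and $\ell^*_{\mathcal S}$ is a given real number with $\ell^*_{\mathcal S}\le f^*_{\mathcal S}$. SGD: $x^{k+1}=x^k-\gamma_k\nabla f_{\mathcal S_k}(x^k)$ from given $x^0$. SPS$^\ell_{\max}$ stepsize: $\gamma_k=\min\left\{\frac{f_{\mathcal S_k}(x^k)-\ell^*_{\mathcal S_k}}{c\|\nabla f_{\mathcal S_k}(x^k)\|^2},\ \gamma_b\right\}$ with constants $c,\gamma_b>0$; if $\nabla f_{\mathcal S_k}(x^k)=0$ the iterate is not updated. $\hat\sigma_B^2:=\mathbb{E}_{\mathcal S}[f_{\mathcal S}(x^* )-\ell^*_{\mathcal S}]=f(x^* )-\mathbb{E}_{\mathcal S}[\ell^*_{\mathcal S}]$ with $\mathcal S$ uniform over subsets of size $B$. *)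

theory Defs
  imports "HOL-Analysis.Analysis"
begin

text \<open>Minibatches of size B from the index set {0..<n} (indices 0..n-1 stand for 1..n).\<close>
definition batches :: "nat \<Rightarrow> nat \<Rightarrow> nat set set" where
  "batches n B = {S. S \<subseteq> {..<n} \<and> card S = B}"

definition fS :: "(nat \<Rightarrow> 'a \<Rightarrow> real) \<Rightarrow> nat set \<Rightarrow> 'a \<Rightarrow> real" where
  "fS f S x = (\<Sum>i\<in>S. f i x) / real (card S)"

definition gS :: "(nat \<Rightarrow> 'a \<Rightarrow> 'a::real_vector) \<Rightarrow> nat set \<Rightarrow> 'a \<Rightarrow> 'a" where
  "gS g S x = (1 / real (card S)) *\<^sub>R (\<Sum>i\<in>S. g i x)"

definition sps_step ::
  "(nat \<Rightarrow> 'a \<Rightarrow> real) \<Rightarrow> (nat \<Rightarrow> 'a \<Rightarrow> 'a::real_inner) \<Rightarrow> (nat set \<Rightarrow> real)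
   \<Rightarrow> real \<Rightarrow> real \<Rightarrow> nat set \<Rightarrow> 'a \<Rightarrow> 'a" where
  "sps_step f g ell c gb S x =
     (if gS g S x = 0 then x
      else x - (min ((fS f S x - ell S) / (c * (norm (gS g S x))\<^sup>2)) gb) *\<^sub>R gS g S x)"

definition sps_iter ::
  "(nat \<Rightarrow> 'a \<Rightarrow> real) \<Rightarrow> (nat \<Rightarrow> 'a \<Rightarrow> 'a::real_inner) \<Rightarrow> (nat set \<Rightarrow> real)
   \<Rightarrow> real \<Rightarrow> real \<Rightarrow> 'a \<Rightarrow> nat set list \<Rightarrow> 'a" where
  "sps_iter f g ell c gb x0 ss = foldl (\<lambda>x S. sps_step f g ell c gb S x) x0 ss"

text \<open>Expectation over k i.i.d. uniform minibatches S_0,...,S_{k-1}: average over all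
  sequences of length k in the (finite) set of batches.\<close>
definition batch_expect :: "nat set set \<Rightarrow> nat \<Rightarrow> (nat set list \<Rightarrow> real) \<Rightarrow> real" where
  "batch_expect Bs k h =
     (\<Sum>ss\<in>{ss. length ss = k \<and> set ss \<subseteq> Bs}. h ss) / real (card Bs) ^ k"

definition sigma_hat :: "(nat \<Rightarrow> 'a \<Rightarrow> real) \<Rightarrow> (nat set \<Rightarrow> real) \<Rightarrow> nat \<Rightarrow> nat \<Rightarrow> 'a \<Rightarrow> real" where
  "sigma_hat f ell n B xs =
     (\<Sum>S\<in>batches n B. fS f S xs - ell S) / real (card (batches n B))"

definition strongly_convex :: "real \<Rightarrow> ('a::real_normed_vector \<Rightarrow> real) \<Rightarrow> bool" where
  "strongly_convex \<mu> h \<longleftrightarrow> (\<forall>x y t. 0 \<le> t \<and> t \<le> 1 \<longrightarrow>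
     h ((1 - t) *\<^sub>R x + t *\<^sub>R y) \<le> (1 - t) * h x + t * h y - \<mu> / 2 * t * (1 - t) * (norm (x - y))\<^sup>2)"

end

theory Submission
  imports Defs
begin

text \<open>
  On a batch S write h = f_S, G = grad f_S and let gamma be the SPS stepsize. Since G is
  L_max-Lipschitz and ell_S is a lower bound of h, one gradient step of length 1/L_max shows
  norm (G x)^2 <= 2 L_max (h x - ell_S), hence gamma >= alpha; and by its very definition
  c gamma norm (G x)^2 <= h x - ell_S, which absorbs the quadratic term in the expansion of
  norm (x - gamma G x - x*)^2. With convexity of h this gives a deterministic one-step bound
  whose error term is 2 gamma_b (h x* - ell_S). Averaging over the uniformly chosen batch turns
  f_S and grad f_S into f and grad f and the error into 2 gamma_b sigma_B^2. Telescoping and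
  Jensen's inequality give (i); with mu-strong convexity the bound becomes a contraction by
  1 - mu alpha, which gives (ii).
\<close>

section \<open>Smooth and strongly convex functions\<close>

lemma lipschitz_gradient_upper_bound:
  fixes h :: "'a::real_inner \<Rightarrow> real"
  assumes der: "\<And>p. (h has_derivative (\<lambda>v. v \<bullet> G p)) (at p)"
    and lip: "\<And>p q. norm (G p - G q) \<le> L * norm (p - q)"
  shows "h (y + d) \<le> h y + d \<bullet> G y + L / 2 * (norm d)\<^sup>2"
proof -
  have line: "((\<lambda>t. h (y + t *\<^sub>R d)) has_real_derivative d \<bullet> G (y + t *\<^sub>R d)) (at t)" for t
  proof -
    have "((\<lambda>t. y + t *\<^sub>R d) has_derivative (\<lambda>s. s *\<^sub>R d)) (at t)"
      by (auto intro!: derivative_eq_intros)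
    from has_derivative_compose[OF this der]
    show ?thesis by (rule has_derivative_imp_has_field_derivative) simp
  qed
  define \<psi> where "\<psi> t = h (y + t *\<^sub>R d) - t * (d \<bullet> G y) - L / 2 * t\<^sup>2 * (norm d)\<^sup>2" for t
  have "\<psi> 1 \<le> \<psi> 0"
  proof (rule DERIV_nonpos_imp_nonincreasing[where f = \<psi>])
    fix t :: real assume t: "0 \<le> t" "t \<le> 1"
    have "(\<psi> has_real_derivative d \<bullet> G (y + t *\<^sub>R d) - d \<bullet> G y - L * t * (norm d)\<^sup>2) (at t)"
      unfolding \<psi>_def by (rule line derivative_eq_intros refl | simp)+
    moreover have "d \<bullet> G (y + t *\<^sub>R d) - d \<bullet> G y \<le> L * t * (norm d)\<^sup>2"
    proof -
      have "d \<bullet> G (y + t *\<^sub>R d) - d \<bullet> G y \<le> norm d * norm (G (y + t *\<^sub>R d) - G y)"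
        by (metis inner_diff_right norm_cauchy_schwarz)
      also have "\<dots> \<le> norm d * (L * norm (t *\<^sub>R d))"
        using lip[of "y + t *\<^sub>R d" y] by (intro mult_left_mono) auto
      finally show ?thesis using t by (simp add: power2_eq_square mult_ac)
    qed
    ultimately show "\<exists>D. (\<psi> has_real_derivative D) (at t) \<and> D \<le> 0"
      by (intro exI conjI) auto
  qed simp
  then show ?thesis by (simp add: \<psi>_def algebra_simps)
qed

lemma lipschitz_gradient_norm_sq_le:
  fixes h :: "'a::real_inner \<Rightarrow> real"
  assumes der: "\<And>p. (h has_derivative (\<lambda>v. v \<bullet> G p)) (at p)"
    and lip: "\<And>p q. norm (G p - G q) \<le> L * norm (p - q)"
    and "0 < L" and lower: "\<And>z. l \<le> h z"
  shows "(norm (G y))\<^sup>2 \<le> 2 * L * (h y - l)"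
proof -
  have "l \<le> h (y + (- 1 / L) *\<^sub>R G y)" by (rule lower)
  also have "\<dots> \<le> h y - (norm (G y))\<^sup>2 / (2 * L)"
    using lipschitz_gradient_upper_bound[OF der lip, of y "(- 1 / L) *\<^sub>R G y"] \<open>0 < L\<close>
    by (simp add: dot_square_norm power2_eq_square field_simps)
  finally show ?thesis using \<open>0 < L\<close> by (simp add: field_simps)
qed

lemma strongly_convex_gradient_inequality:
  fixes h :: "'a::real_normed_vector \<Rightarrow> real"
  assumes sc: "strongly_convex \<mu> h" and der: "(h has_derivative D) (at x)"
  shows "h x + D (y - x) + \<mu> / 2 * (norm (y - x))\<^sup>2 \<le> h y"
proof -
  define d where "d = y - x"
  have "((\<lambda>t. x + t *\<^sub>R d) has_derivative (\<lambda>s. s *\<^sub>R d)) (at 0)"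
    by (auto intro!: derivative_eq_intros)
  from has_derivative_compose[OF this, of h D] der
  have "((\<lambda>t. h (x + t *\<^sub>R d)) has_derivative (\<lambda>s. D (s *\<^sub>R d))) (at 0)" by simp
  then have "((\<lambda>t. h (x + t *\<^sub>R d)) has_real_derivative D d) (at 0)"
    by (rule has_derivative_imp_has_field_derivative)
      (simp add: linear_cmul[OF has_derivative_linear[OF der]])
  then have "((\<lambda>s. (h (x + s *\<^sub>R d) - h x) / s) \<longlongrightarrow> D d) (at_right 0)"
    by (auto simp: DERIV_def intro: tendsto_within_subset)
  moreover have "((\<lambda>s. h y - h x - \<mu> / 2 * (1 - s) * (norm d)\<^sup>2)
      \<longlongrightarrow> h y - h x - \<mu> / 2 * (1 - 0) * (norm d)\<^sup>2) (at_right 0)"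
    by (intro tendsto_intros)
  moreover have "eventually (\<lambda>s. (h (x + s *\<^sub>R d) - h x) / s
      \<le> h y - h x - \<mu> / 2 * (1 - s) * (norm d)\<^sup>2) (at_right (0::real))"
    using eventually_at_right_real[OF zero_less_one]
  proof (rule eventually_mono)
    fix s :: real assume s: "s \<in> {0<..<1}"
    have "h ((1 - s) *\<^sub>R x + s *\<^sub>R y)
        \<le> (1 - s) * h x + s * h y - \<mu> / 2 * s * (1 - s) * (norm (x - y))\<^sup>2"
      using sc s unfolding strongly_convex_def by auto
    moreover have "(1 - s) *\<^sub>R x + s *\<^sub>R y = x + s *\<^sub>R d" by (simp add: d_def algebra_simps)
    ultimately have "h (x + s *\<^sub>R d) - h x \<le> s * (h y - h x - \<mu> / 2 * (1 - s) * (norm d)\<^sup>2)"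
      by (simp add: d_def norm_minus_commute algebra_simps)
    then show "(h (x + s *\<^sub>R d) - h x) / s \<le> h y - h x - \<mu> / 2 * (1 - s) * (norm d)\<^sup>2"
      using s by (simp add: divide_simps mult.commute)
  qed
  ultimately have "D d \<le> h y - h x - \<mu> / 2 * (1 - 0) * (norm d)\<^sup>2"
    by (intro tendsto_le[OF trivial_limit_at_right_real])
  then show ?thesis by (simp add: d_def)
qed

lemma convex_on_imp_strongly_convex_0:
  "convex_on UNIV h \<Longrightarrow> strongly_convex 0 h"
  unfolding strongly_convex_def by (simp add: convex_onD)

lemma strongly_convex_modulus_le_lipschitz:
  fixes h :: "'a::euclidean_space \<Rightarrow> real"
  assumes sc: "strongly_convex \<mu> h"
    and der: "\<And>p. (h has_derivative (\<lambda>v. v \<bullet> G p)) (at p)"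
    and lip: "\<And>p q. norm (G p - G q) \<le> L * norm (p - q)"
  shows "\<mu> \<le> L"
proof -
  obtain b :: 'a where "b \<in> Basis" using nonempty_Basis by blast
  then have "0 < norm b" by (simp add: nonzero_Basis)
  have "h y + b \<bullet> G y + \<mu> / 2 * (norm b)\<^sup>2 \<le> h (y + b)"
    using strongly_convex_gradient_inequality[OF sc der, of y "y + b"] by (simp add: inner_commute)
  also have "\<dots> \<le> h y + b \<bullet> G y + L / 2 * (norm b)\<^sup>2"
    by (rule lipschitz_gradient_upper_bound[OF der lip])
  finally show ?thesis using \<open>0 < norm b\<close> by simp
qed

section \<open>A single SPS step\<close>

lemma norm_sq_diff_scaleR:
  fixes a v :: "'a::real_inner"
  shows "(norm (a - t *\<^sub>R v))\<^sup>2 = (norm a)\<^sup>2 - 2 * t * (v \<bullet> a) + t\<^sup>2 * (norm v)\<^sup>2"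
  unfolding power2_norm_eq_inner
  by (simp add: inner_diff_left inner_diff_right inner_commute[of a v] power2_eq_square algebra_simps)

lemma gradient_step_dist_le:
  fixes y z G :: "'a::real_inner"
  assumes "0 \<le> \<alpha>" "\<alpha> \<le> \<gamma>" "\<gamma> \<le> gb"
    and step: "\<gamma> * (norm G)\<^sup>2 \<le> h y - l" and "l \<le> h z"
    and tangent: "h y + G \<bullet> (z - y) \<le> h z"
  shows "(norm (y - \<gamma> *\<^sub>R G - z))\<^sup>2 \<le> (norm (y - z))\<^sup>2 - \<alpha> * (h y - h z) + 2 * gb * (h z - l)"
proof -
  have "0 \<le> \<gamma> * (norm G)\<^sup>2" using assms(1,2) by simp
  have "\<gamma> * (\<gamma> * (norm G)\<^sup>2) \<le> \<gamma> * (h y - l)"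
    using step assms(1,2) by (intro mult_left_mono) auto
  moreover have "\<gamma> * (h y - h z) \<le> \<gamma> * (G \<bullet> (y - z))"
    using tangent assms(1,2) by (intro mult_left_mono) (auto simp: inner_diff_right)
  moreover have "\<alpha> * (h y - l) \<le> \<gamma> * (h y - l)"
    using step assms(2) \<open>0 \<le> \<gamma> * (norm G)\<^sup>2\<close> by (intro mult_right_mono) auto
  moreover have "\<gamma> * (h z - l) \<le> gb * (h z - l)" "0 \<le> \<alpha> * (h z - l)"
    using assms by (auto intro: mult_right_mono)
  ultimately show ?thesis
    using norm_sq_diff_scaleR[of "y - z" \<gamma> G] by (simp add: power2_eq_square algebra_simps)
qed

lemma gradient_step_dist_le_inner:
  fixes y z G :: "'a::real_inner"
  assumes "0 \<le> \<alpha>" "\<alpha> \<le> \<gamma>" "\<gamma> \<le> gb"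
    and step: "\<gamma> * (norm G)\<^sup>2 \<le> 2 * (h y - l)" and "l \<le> h z"
    and tangent: "h y + G \<bullet> (z - y) \<le> h z"
  shows "(norm (y - \<gamma> *\<^sub>R G - z))\<^sup>2
    \<le> (norm (y - z))\<^sup>2 - 2 * \<alpha> * (G \<bullet> (y - z) - h y + h z) + 2 * gb * (h z - l)"
proof -
  have "\<gamma> * (\<gamma> * (norm G)\<^sup>2) \<le> \<gamma> * (2 * (h y - l))"
    using step assms(1,2) by (intro mult_left_mono) auto
  moreover have "\<alpha> * (G \<bullet> (y - z) - h y + h z) \<le> \<gamma> * (G \<bullet> (y - z) - h y + h z)"
    using tangent assms(2) by (intro mult_right_mono) (auto simp: inner_diff_right)
  moreover have "\<gamma> * (h z - l) \<le> gb * (h z - l)"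
    using assms by (auto intro: mult_right_mono)
  ultimately show ?thesis
    using norm_sq_diff_scaleR[of "y - z" \<gamma> G] by (simp add: power2_eq_square algebra_simps)
qed

lemma sps_step_eq_gradient_step:
  assumes gap: "(norm (gS g S y))\<^sup>2 \<le> 2 * L * (fS f S y - ell S)"
    and "0 < c" "0 < L" "0 < gb"
  obtains \<gamma> where "sps_step f g ell c gb S y = y - \<gamma> *\<^sub>R gS g S y"
    and "min (1 / (2 * c * L)) gb \<le> \<gamma>" "\<gamma> \<le> gb"
    and "c * \<gamma> * (norm (gS g S y))\<^sup>2 \<le> fS f S y - ell S"
proof (cases "gS g S y = 0")
  case True
  \<comment> \<open>the step does not move, so any stepsize represents it\<close>
  have "0 \<le> fS f S y - ell S" using gap True \<open>0 < L\<close> by (simp add: zero_le_mult_iff)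
  with True show ?thesis
    by (intro that[of "min (1 / (2 * c * L)) gb"]) (auto simp: sps_step_def)
next
  case False
  define P where "P = (norm (gS g S y))\<^sup>2"
  have "0 < P" using False by (simp add: P_def)
  show ?thesis
  proof (rule that[of "min ((fS f S y - ell S) / (c * P)) gb"])
    show "sps_step f g ell c gb S y = y - min ((fS f S y - ell S) / (c * P)) gb *\<^sub>R gS g S y"
      using False by (simp add: sps_step_def P_def)
    have "1 / (2 * c * L) = (P / (2 * L)) / (c * P)"
      using \<open>0 < P\<close> \<open>0 < c\<close> \<open>0 < L\<close> by (simp add: field_simps)
    also have "\<dots> \<le> (fS f S y - ell S) / (c * P)"
      using gap \<open>0 < P\<close> \<open>0 < c\<close> \<open>0 < L\<close> by (intro divide_right_mono) (auto simp: P_def field_simps)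
    finally show "min (1 / (2 * c * L)) gb \<le> min ((fS f S y - ell S) / (c * P)) gb"
      by (rule min.mono) simp
    have "c * min ((fS f S y - ell S) / (c * P)) gb * P \<le> c * ((fS f S y - ell S) / (c * P)) * P"
      using \<open>0 < P\<close> \<open>0 < c\<close> by (intro mult_right_mono mult_left_mono) auto
    then show "c * min ((fS f S y - ell S) / (c * P)) gb * (norm (gS g S y))\<^sup>2 \<le> fS f S y - ell S"
      using \<open>0 < P\<close> \<open>0 < c\<close> by (simp add: P_def)
  qed simp
qed

section \<open>Minibatch averages\<close>

lemma convex_on_sum_fun:
  assumes "finite I" "\<And>i. i \<in> I \<Longrightarrow> convex_on UNIV (f i)"
  shows "convex_on UNIV (\<lambda>x. \<Sum>i\<in>I. f i x)"
  using assms by (induction I rule: finite_induct) (auto simp: convex_on_const)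

lemma convex_on_fS:
  assumes "finite S" "\<And>i. i \<in> S \<Longrightarrow> convex_on UNIV (f i)"
  shows "convex_on UNIV (fS f S)"
proof -
  have "convex_on UNIV (\<lambda>x. (\<Sum>i\<in>S. f i x) / real (card S))"
    using assms by (intro convex_on_cdiv convex_on_sum_fun) auto
  then show ?thesis by (simp add: fS_def [abs_def])
qed

lemma has_derivative_fS:
  fixes f :: "nat \<Rightarrow> 'a::real_inner \<Rightarrow> real"
  assumes "\<And>i. i \<in> S \<Longrightarrow> (f i has_derivative (\<lambda>v. v \<bullet> g i p)) (at p)"
  shows "(fS f S has_derivative (\<lambda>v. v \<bullet> gS g S p)) (at p)"
proof -
  have "((\<lambda>x. (\<Sum>i\<in>S. f i x) / real (card S)) has_derivative (\<lambda>v. (\<Sum>i\<in>S. v \<bullet> g i p) / real (card S))) (at p)"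
    using assms by (intro bounded_linear.has_derivative[OF bounded_linear_divide] has_derivative_sum)
  then show ?thesis
    by (simp add: fS_def [abs_def] gS_def inner_sum_right)
qed

lemma lipschitz_gS:
  fixes g :: "nat \<Rightarrow> 'a::real_normed_vector \<Rightarrow> 'a"
  assumes "finite S" "S \<noteq> {}" "\<And>i. i \<in> S \<Longrightarrow> norm (g i p - g i q) \<le> L * norm (p - q)"
  shows "norm (gS g S p - gS g S q) \<le> L * norm (p - q)"
proof -
  have "0 < real (card S)" using assms by (simp add: card_gt_0_iff)
  have "norm (gS g S p - gS g S q) = norm (\<Sum>i\<in>S. g i p - g i q) / real (card S)"
    by (simp add: gS_def sum_subtractf flip: scaleR_diff_right)
  also have "\<dots> \<le> (\<Sum>i\<in>S. L * norm (p - q)) / real (card S)"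
    using assms(3) by (intro divide_right_mono order_trans[OF norm_sum sum_mono]) auto
  also have "\<dots> = L * norm (p - q)" using \<open>0 < real (card S)\<close> by simp
  finally show ?thesis .
qed

lemma finite_batches: "finite (batches n B)"
  unfolding batches_def by (rule finite_subset[of _ "Pow {..<n}"]) auto

lemma batches_nonempty: "B \<le> n \<Longrightarrow> batches n B \<noteq> {}"
  unfolding batches_def by (metis (mono_tags) card_lessThan empty_iff lessThan_subset_iff mem_Collect_eq)

lemma card_batches: "card (batches n B) = n choose B"
  unfolding batches_def using n_subsets[of "{..<n}" B] by simp

lemma card_batches_containing:
  assumes "1 \<le> B" "i < n"
  shows "card {S \<in> batches n B. i \<in> S} = (n - 1) choose (B - 1)"
proof -
  let ?T = "{T. T \<subseteq> {..<n} - {i} \<and> card T = B - 1}"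
  have "{S \<in> batches n B. i \<in> S} = insert i ` ?T"
  proof (intro set_eqI iffI)
    fix S assume S: "S \<in> {S \<in> batches n B. i \<in> S}"
    then have "finite S" by (auto simp: batches_def intro: finite_subset)
    with S have "S - {i} \<in> ?T" by (auto simp: batches_def)
    moreover have "S = insert i (S - {i})" using S by auto
    ultimately show "S \<in> insert i ` ?T" by blast
  next
    fix S assume "S \<in> insert i ` ?T"
    then obtain T where T: "T \<subseteq> {..<n} - {i}" "card T = B - 1" "S = insert i T" by auto
    then have "finite T" "i \<notin> T" by (auto intro: finite_subset)
    with T assms show "S \<in> {S \<in> batches n B. i \<in> S}" by (auto simp: batches_def)
  qed
  moreover have "inj_on (insert i) ?T"
    by (rule inj_onI) (metis Diff_insert_absorb mem_Collect_eq subset_Diff_insert)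
  ultimately have "card {S \<in> batches n B. i \<in> S} = card ?T"
    by (simp add: card_image)
  also have "\<dots> = (n - 1) choose (B - 1)"
    using n_subsets[of "{..<n} - {i}" "B - 1"] assms by simp
  finally show ?thesis .
qed

text \<open>Unbiasedness of minibatch averages: every index lies in the same number of batches.\<close>
lemma sum_batches_mean:
  fixes v :: "nat \<Rightarrow> 'b::real_vector"
  assumes "1 \<le> B" "B \<le> n"
  shows "(\<Sum>S\<in>batches n B. (1 / real (card S)) *\<^sub>R (\<Sum>i\<in>S. v i))
       = (real (card (batches n B)) / real n) *\<^sub>R (\<Sum>i<n. v i)"
proof -
  let ?Bs = "batches n B"
  have "(\<Sum>S\<in>?Bs. (1 / real (card S)) *\<^sub>R (\<Sum>i\<in>S. v i))
      = (1 / real B) *\<^sub>R (\<Sum>S\<in>?Bs. \<Sum>i\<in>{i \<in> {..<n}. i \<in> S}. v i)"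
    unfolding scaleR_sum_right by (intro sum.cong refl) (auto simp: batches_def Int_absorb1 [symmetric] Collect_conj_eq)
  also have "(\<Sum>S\<in>?Bs. \<Sum>i\<in>{i \<in> {..<n}. i \<in> S}. v i) = (\<Sum>i<n. \<Sum>S\<in>{S \<in> ?Bs. i \<in> S}. v i)"
    by (rule sum.swap_restrict) (auto simp: finite_batches)
  also have "\<dots> = (\<Sum>i<n. real ((n - 1) choose (B - 1)) *\<^sub>R v i)"
    using assms by (intro sum.cong refl) (simp add: sum_constant_scaleR card_batches_containing)
  also have "(1 / real B) *\<^sub>R \<dots> = (real ((n - 1) choose (B - 1)) / real B) *\<^sub>R (\<Sum>i<n. v i)"
    by (simp add: scaleR_sum_right)
  also have "real ((n - 1) choose (B - 1)) / real B = real (card ?Bs) / real n"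
  proof -
    have "real B * real (n choose B) = real n * real ((n - 1) choose (B - 1))"
      using binomial_absorption[of "B - 1" n] assms by (simp flip: of_nat_mult)
    then show ?thesis using assms by (simp add: card_batches field_simps)
  qed
  finally show ?thesis .
qed

section \<open>Expectation over sequences of batches\<close>

lemma batch_expect_0: "batch_expect Bs 0 h = h []"
proof -
  have "{ss. length ss = 0 \<and> set ss \<subseteq> Bs} = {[]}" by auto
  then show ?thesis by (simp add: batch_expect_def)
qed

lemma batch_expect_Suc:
  assumes "finite Bs"
  shows "batch_expect Bs (Suc k) h
       = batch_expect Bs k (\<lambda>ss. (\<Sum>S\<in>Bs. h (ss @ [S])) / real (card Bs))"
proof -
  let ?L = "\<lambda>k. {ss. length ss = k \<and> set ss \<subseteq> Bs}"
  have L_Suc: "?L (Suc k) = (\<lambda>(ss, S). ss @ [S]) ` (?L k \<times> Bs)"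
  proof (intro set_eqI iffI)
    fix ss assume ss: "ss \<in> ?L (Suc k)"
    then have "ss \<noteq> []" by auto
    with ss have "ss = butlast ss @ [last ss]" "(butlast ss, last ss) \<in> ?L k \<times> Bs"
      by (auto dest: in_set_butlastD)
    then show "ss \<in> (\<lambda>(ss, S). ss @ [S]) ` (?L k \<times> Bs)" by force
  qed auto
  have "inj_on (\<lambda>(ss, S). ss @ [S]) (?L k \<times> Bs)"
    by (rule inj_onI) auto
  then have "(\<Sum>ss\<in>?L (Suc k). h ss) = (\<Sum>(ss, S)\<in>?L k \<times> Bs. h (ss @ [S]))"
    unfolding L_Suc by (subst sum.reindex) (auto simp: case_prod_beta)
  then have "(\<Sum>ss\<in>?L (Suc k). h ss) = (\<Sum>ss\<in>?L k. \<Sum>S\<in>Bs. h (ss @ [S]))"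
    by (simp add: sum.cartesian_product)
  then show ?thesis
    by (simp add: batch_expect_def sum_divide_distrib [symmetric] field_simps)
qed

lemma batch_expect_mono:
  assumes "\<And>ss. length ss = k \<Longrightarrow> set ss \<subseteq> Bs \<Longrightarrow> h ss \<le> h' ss"
  shows "batch_expect Bs k h \<le> batch_expect Bs k h'"
  unfolding batch_expect_def using assms by (intro divide_right_mono sum_mono) auto

lemma batch_expect_cong:
  assumes "\<And>ss. length ss = k \<Longrightarrow> set ss \<subseteq> Bs \<Longrightarrow> h ss = h' ss"
  shows "batch_expect Bs k h = batch_expect Bs k h'"
  by (metis (mono_tags, lifting) antisym assms batch_expect_mono order_refl)

lemma batch_expect_add:
  "batch_expect Bs k (\<lambda>ss. h ss + h' ss) = batch_expect Bs k h + batch_expect Bs k h'"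
  unfolding batch_expect_def by (simp add: sum.distrib add_divide_distrib)

lemma batch_expect_diff:
  "batch_expect Bs k (\<lambda>ss. h ss - h' ss) = batch_expect Bs k h - batch_expect Bs k h'"
  unfolding batch_expect_def by (simp add: sum_subtractf diff_divide_distrib)

lemma batch_expect_cmult: "batch_expect Bs k (\<lambda>ss. a * h ss) = a * batch_expect Bs k h"
  unfolding batch_expect_def by (simp add: sum_distrib_left)

lemma batch_expect_const:
  assumes "finite Bs" "Bs \<noteq> {}"
  shows "batch_expect Bs k (\<lambda>ss. a) = a"
  using assms card_lists_length_eq[OF assms(1), of k]
  by (simp add: batch_expect_def conj_commute card_gt_0_iff)

lemma batch_expect_sum:
  "batch_expect Bs k (\<lambda>ss. \<Sum>j\<in>I. h j ss) = (\<Sum>j\<in>I. batch_expect Bs k (h j))"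
  unfolding batch_expect_def by (simp add: sum.swap [of _ I] sum_divide_distrib)

lemma batch_expect_take:
  assumes "finite Bs" "Bs \<noteq> {}" "k \<le> m"
  shows "batch_expect Bs m (\<lambda>ss. h (take k ss)) = batch_expect Bs k h"
  using assms(3)
proof (induction m)
  case 0
  then show ?case by (simp add: batch_expect_0)
next
  case (Suc m)
  show ?case
  proof (cases "k = Suc m")
    case True
    then show ?thesis by (simp only:) (rule batch_expect_cong, simp)
  next
    case False
    with Suc.prems have "k \<le> m" by simp
    have "batch_expect Bs (Suc m) (\<lambda>ss. h (take k ss))
        = batch_expect Bs m (\<lambda>ss. (\<Sum>S\<in>Bs. h (take k (ss @ [S]))) / real (card Bs))"
      by (rule batch_expect_Suc[OF assms(1)])
    also have "\<dots> = batch_expect Bs m (\<lambda>ss. h (take k ss))"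
      using \<open>k \<le> m\<close> assms(1,2) by (intro batch_expect_cong) (simp add: card_gt_0_iff)
    finally show ?thesis using Suc.IH[OF \<open>k \<le> m\<close>] by simp
  qed
qed

lemma batch_expect_sps_iter_Suc_le:
  assumes "finite Bs"
    and step: "\<And>y. (\<Sum>S\<in>Bs. V (sps_step f g ell c gb S y)) / real (card Bs) \<le> W y"
  shows "batch_expect Bs (Suc k) (\<lambda>ss. V (sps_iter f g ell c gb x0 ss))
       \<le> batch_expect Bs k (\<lambda>ss. W (sps_iter f g ell c gb x0 ss))"
  unfolding batch_expect_Suc[OF assms(1)]
  by (rule batch_expect_mono) (simp add: sps_iter_def step)

lemma batch_expect_convex_average_le:
  assumes "convex_on UNIV h" "finite Bs" "Bs \<noteq> {}" "1 \<le> K"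
  shows "batch_expect Bs K (\<lambda>ss. h ((1 / real K) *\<^sub>R (\<Sum>k<K. X (take k ss))))
       \<le> (\<Sum>k<K. batch_expect Bs k (\<lambda>ss. h (X ss))) / real K"
proof -
  have "batch_expect Bs K (\<lambda>ss. h ((1 / real K) *\<^sub>R (\<Sum>k<K. X (take k ss))))
      \<le> batch_expect Bs K (\<lambda>ss. (1 / real K) * (\<Sum>k<K. h (X (take k ss))))"
  proof (rule batch_expect_mono)
    fix ss
    have "h (\<Sum>k<K. (1 / real K) *\<^sub>R X (take k ss)) \<le> (\<Sum>k<K. (1 / real K) * h (X (take k ss)))"
      using assms(4) by (intro convex_on_sum[OF _ _ assms(1)]) (auto simp: lessThan_empty_iff)
    then show "h ((1 / real K) *\<^sub>R (\<Sum>k<K. X (take k ss))) \<le> (1 / real K) * (\<Sum>k<K. h (X (take k ss)))"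
      by (simp add: scaleR_sum_right sum_distrib_left)
  qed
  also have "\<dots> = (1 / real K) * (\<Sum>k<K. batch_expect Bs K (\<lambda>ss. h (X (take k ss))))"
    by (simp only: batch_expect_cmult batch_expect_sum)
  also have "\<dots> = (\<Sum>k<K. batch_expect Bs k (\<lambda>ss. h (X ss))) / real K"
    using batch_expect_take[OF assms(2,3), where h = "\<lambda>ss. h (X ss)"] by simp
  finally show ?thesis .
qed

lemma sum_le_of_descent:
  fixes e a :: "nat \<Rightarrow> real"
  assumes "\<And>k. e (Suc k) \<le> e k - a k + C" and "\<And>k. 0 \<le> e k"
  shows "(\<Sum>k<K. a k) \<le> e 0 + real K * C"
proof -
  have "(\<Sum>k<K. a k) + e K \<le> e 0 + real K * C"
  proof (induction K)
    case (Suc K)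
    then show ?case using assms(1)[of K] by (simp add: algebra_simps)
  qed simp
  with assms(2)[of K] show ?thesis by linarith
qed

lemma linear_recursion_le:
  fixes e :: "nat \<Rightarrow> real"
  assumes "\<And>k. e (Suc k) \<le> (1 - m) * e k + C" and "0 < m" "m \<le> 1" "0 \<le> C"
  shows "e k \<le> (1 - m) ^ k * e 0 + C / m"
proof (induction k)
  case 0
  then show ?case using assms by simp
next
  case (Suc k)
  have "(1 - m) * e k \<le> (1 - m) * ((1 - m) ^ k * e 0 + C / m)"
    using Suc.IH assms(3) by (intro mult_left_mono) auto
  then have "e (Suc k) \<le> (1 - m) * ((1 - m) ^ k * e 0 + C / m) + C"
    using assms(1)[of k] by linarith
  also have "\<dots> = (1 - m) ^ Suc k * e 0 + C / m"
    using \<open>0 < m\<close> by (simp add: field_simps)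
  finally show ?case .
qed

section \<open>SGD with the SPS stepsize\<close>

locale sps_problem =
  fixes f :: "nat \<Rightarrow> 'a::euclidean_space \<Rightarrow> real"
    and g :: "nat \<Rightarrow> 'a \<Rightarrow> 'a"
    and L :: "nat \<Rightarrow> real"
    and n B :: nat
    and ell :: "nat set \<Rightarrow> real"
    and c gb :: real
  assumes B_range: "1 \<le> B" "B \<le> n"
    and grad: "\<And>i y. i < n \<Longrightarrow> GDERIV (f i) y :> g i y"
    and convex: "\<And>i. i < n \<Longrightarrow> convex_on UNIV (f i)"
    and L_pos: "\<And>i. i < n \<Longrightarrow> 0 < L i"
    and smooth: "\<And>i y z. i < n \<Longrightarrow> norm (g i y - g i z) \<le> L i * norm (y - z)"
    and ell_le: "\<And>S y. S \<in> batches n B \<Longrightarrow> ell S \<le> fS f S y"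
    and c_pos: "0 < c" and gb_pos: "0 < gb"
begin

abbreviation "Bs \<equiv> batches n B"
abbreviation "Lmax \<equiv> Max (L ` {..<n})"
abbreviation "\<alpha> \<equiv> min (1 / (2 * c * Lmax)) gb"
abbreviation F :: "'a \<Rightarrow> real" where "F x \<equiv> (\<Sum>i<n. f i x) / real n"
abbreviation "iterate x0 \<equiv> sps_iter f g ell c gb x0"

lemma batchesD:
  assumes "S \<in> Bs"
  shows "S \<subseteq> {..<n}" "S \<noteq> {}" "finite S"
  using assms B_range by (auto simp: batches_def intro: finite_subset)

lemma card_batches_pos: "0 < real (card Bs)"
  using finite_batches batches_nonempty[OF B_range(2)] by (simp add: card_gt_0_iff)

lemma L_le_Lmax: "i < n \<Longrightarrow> L i \<le> Lmax"
  by (intro Max_ge) auto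

lemma Lmax_pos: "0 < Lmax"
proof -
  have "0 < n" using B_range by simp
  with L_le_Lmax L_pos show ?thesis by (meson order_less_le_trans)
qed

lemma alpha_pos: "0 < \<alpha>"
  using c_pos Lmax_pos gb_pos by simp

lemma fS_has_derivative:
  "S \<subseteq> {..<n} \<Longrightarrow> (fS f S has_derivative (\<lambda>v. v \<bullet> gS g S p)) (at p)"
  using grad by (intro has_derivative_fS) (auto simp: gderiv_def)

lemma gS_lipschitz:
  assumes "S \<subseteq> {..<n}" "S \<noteq> {}"
  shows "norm (gS g S p - gS g S q) \<le> Lmax * norm (p - q)"
proof (rule lipschitz_gS)
  show "finite S" using assms(1) by (rule finite_subset) simp
  fix i assume "i \<in> S"
  with assms(1) have "i < n" by auto
  then show "norm (g i p - g i q) \<le> Lmax * norm (p - q)"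
    using smooth L_le_Lmax by (meson mult_right_mono norm_ge_zero order_trans)
qed fact

lemma fS_convex: "S \<subseteq> {..<n} \<Longrightarrow> convex_on UNIV (fS f S)"
  using convex by (intro convex_on_fS) (auto intro: finite_subset)

lemma fS_full: "fS f {..<n} = F"
  by (simp add: fS_def [abs_def])

lemma sum_batches_fS: "(\<Sum>S\<in>Bs. fS f S y) = real (card Bs) * F y"
  using sum_batches_mean[OF B_range, of "\<lambda>i. f i y"] by (simp add: fS_def)

lemma sum_batches_gS: "(\<Sum>S\<in>Bs. gS g S y) = real (card Bs) *\<^sub>R gS g {..<n} y"
  using sum_batches_mean[OF B_range, of "\<lambda>i. g i y"] by (simp add: gS_def)

lemma sum_batches_sigma_hat:
  "(\<Sum>S\<in>Bs. fS f S z - ell S) = real (card Bs) * sigma_hat f ell n B z"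
  using card_batches_pos by (simp add: sigma_hat_def)

lemma sigma_hat_nonneg: "0 \<le> sigma_hat f ell n B z"
  unfolding sigma_hat_def using ell_le by (intro divide_nonneg_nonneg sum_nonneg) auto

lemma sps_step_batch:
  assumes "S \<in> Bs"
  obtains \<gamma> where "sps_step f g ell c gb S y = y - \<gamma> *\<^sub>R gS g S y"
    and "\<alpha> \<le> \<gamma>" "\<gamma> \<le> gb" "c * \<gamma> * (norm (gS g S y))\<^sup>2 \<le> fS f S y - ell S"
proof -
  have "(norm (gS g S y))\<^sup>2 \<le> 2 * Lmax * (fS f S y - ell S)"
    using batchesD[OF assms] ell_le[OF assms]
    by (intro lipschitz_gradient_norm_sq_le fS_has_derivative gS_lipschitz Lmax_pos) auto
  from sps_step_eq_gradient_step[where ell = ell and S = S, OF this c_pos Lmax_pos gb_pos] that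
  show ?thesis by blast
qed

lemma fS_tangent: "S \<in> Bs \<Longrightarrow> fS f S y + gS g S y \<bullet> (z - y) \<le> fS f S z"
  using strongly_convex_gradient_inequality[OF convex_on_imp_strongly_convex_0 fS_has_derivative]
    fS_convex batchesD by (simp add: inner_commute)

lemma sps_step_dist_le:
  assumes "S \<in> Bs" "1 \<le> c"
  shows "(norm (sps_step f g ell c gb S y - z))\<^sup>2
    \<le> (norm (y - z))\<^sup>2 - \<alpha> * (fS f S y - fS f S z) + 2 * gb * (fS f S z - ell S)"
proof -
  obtain \<gamma> where step: "sps_step f g ell c gb S y = y - \<gamma> *\<^sub>R gS g S y"
    and \<gamma>: "\<alpha> \<le> \<gamma>" "\<gamma> \<le> gb" "c * \<gamma> * (norm (gS g S y))\<^sup>2 \<le> fS f S y - ell S"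
    using sps_step_batch[OF assms(1)] .
  have "0 \<le> \<gamma>" using \<gamma>(1) alpha_pos by linarith
  then have nonneg: "0 \<le> \<gamma> * (norm (gS g S y))\<^sup>2" by simp
  have "\<gamma> * (norm (gS g S y))\<^sup>2 \<le> fS f S y - ell S"
    using mult_right_mono[OF assms(2) nonneg] \<gamma>(3) by (simp add: mult.assoc)
  with \<gamma> show ?thesis
    unfolding step using alpha_pos ell_le[OF assms(1)] fS_tangent[OF assms(1)]
    by (intro gradient_step_dist_le) auto
qed

lemma sps_step_dist_le_inner:
  assumes "S \<in> Bs" "1 / 2 \<le> c"
  shows "(norm (sps_step f g ell c gb S y - z))\<^sup>2 \<le> (norm (y - z))\<^sup>2
    - 2 * \<alpha> * (gS g S y \<bullet> (y - z) - fS f S y + fS f S z) + 2 * gb * (fS f S z - ell S)"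
proof -
  obtain \<gamma> where step: "sps_step f g ell c gb S y = y - \<gamma> *\<^sub>R gS g S y"
    and \<gamma>: "\<alpha> \<le> \<gamma>" "\<gamma> \<le> gb" "c * \<gamma> * (norm (gS g S y))\<^sup>2 \<le> fS f S y - ell S"
    using sps_step_batch[OF assms(1)] .
  have "0 \<le> \<gamma>" using \<gamma>(1) alpha_pos by linarith
  then have nonneg: "0 \<le> \<gamma> * (norm (gS g S y))\<^sup>2" by simp
  have "\<gamma> * (norm (gS g S y))\<^sup>2 \<le> 2 * (fS f S y - ell S)"
    using mult_right_mono[OF assms(2) nonneg] \<gamma>(3) by (simp add: mult.assoc)
  with \<gamma> show ?thesis
    unfolding step using alpha_pos ell_le[OF assms(1)] fS_tangent[OF assms(1)]
    by (intro gradient_step_dist_le_inner) auto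
qed

lemma F_has_derivative: "(F has_derivative (\<lambda>v. v \<bullet> gS g {..<n} p)) (at p)"
  using fS_has_derivative[of "{..<n}"] by (simp add: fS_full)

lemma F_gradient_lipschitz: "norm (gS g {..<n} p - gS g {..<n} q) \<le> Lmax * norm (p - q)"
  using B_range by (intro gS_lipschitz) (auto simp: lessThan_empty_iff)

lemma expected_step_dist_le:
  assumes "1 \<le> c"
  shows "(\<Sum>S\<in>Bs. (norm (sps_step f g ell c gb S y - z))\<^sup>2) / real (card Bs)
    \<le> (norm (y - z))\<^sup>2 - \<alpha> * (F y - F z) + 2 * gb * sigma_hat f ell n B z"
proof -
  have "(\<Sum>S\<in>Bs. (norm (sps_step f g ell c gb S y - z))\<^sup>2)
      \<le> (\<Sum>S\<in>Bs. (norm (y - z))\<^sup>2 - \<alpha> * (fS f S y - fS f S z) + 2 * gb * (fS f S z - ell S))"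
    using assms by (intro sum_mono sps_step_dist_le)
  also have "\<dots> = real (card Bs) * (norm (y - z))\<^sup>2 - \<alpha> * (real (card Bs) * F y - real (card Bs) * F z)
      + 2 * gb * (real (card Bs) * sigma_hat f ell n B z)"
    unfolding sum.distrib sum_distrib_left [symmetric] sum_batches_sigma_hat
    by (simp only: sum_subtractf sum_constant sum_batches_fS flip: sum_distrib_left)
  also have "\<dots> = real (card Bs) * ((norm (y - z))\<^sup>2 - \<alpha> * (F y - F z) + 2 * gb * sigma_hat f ell n B z)"
    by (simp add: algebra_simps)
  finally show ?thesis by (metis pos_divide_le_eq mult.commute card_batches_pos)
qed

lemma expected_step_dist_le_strongly_convex:
  assumes "strongly_convex \<mu> F" "1 / 2 \<le> c"
  shows "(\<Sum>S\<in>Bs. (norm (sps_step f g ell c gb S y - z))\<^sup>2) / real (card Bs)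
    \<le> (1 - \<mu> * \<alpha>) * (norm (y - z))\<^sup>2 + 2 * gb * sigma_hat f ell n B z"
proof -
  let ?G = "gS g {..<n} y"
  have "(\<Sum>S\<in>Bs. (norm (sps_step f g ell c gb S y - z))\<^sup>2) \<le> (\<Sum>S\<in>Bs. (norm (y - z))\<^sup>2
      - 2 * \<alpha> * (gS g S y \<bullet> (y - z) - fS f S y + fS f S z) + 2 * gb * (fS f S z - ell S))"
    using assms by (intro sum_mono sps_step_dist_le_inner)
  also have "\<dots> = real (card Bs) * (norm (y - z))\<^sup>2 - 2 * \<alpha> * ((real (card Bs) *\<^sub>R ?G) \<bullet> (y - z)
      - real (card Bs) * F y + real (card Bs) * F z) + 2 * gb * (real (card Bs) * sigma_hat f ell n B z)"
    unfolding sum.distrib sum_distrib_left [symmetric] sum_batches_sigma_hat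
    by (simp only: sum.distrib sum_subtractf sum_constant sum_batches_fS sum_batches_gS
        flip: sum_distrib_left inner_sum_left)
  also have "\<dots> = real (card Bs) * ((norm (y - z))\<^sup>2
      - 2 * \<alpha> * (?G \<bullet> (y - z) - F y + F z) + 2 * gb * sigma_hat f ell n B z)"
    by (simp add: algebra_simps)
  also have "\<dots> \<le> real (card Bs) * ((1 - \<mu> * \<alpha>) * (norm (y - z))\<^sup>2 + 2 * gb * sigma_hat f ell n B z)"
  proof -
    have "F y + ?G \<bullet> (z - y) + \<mu> / 2 * (norm (y - z))\<^sup>2 \<le> F z"
      using strongly_convex_gradient_inequality[OF assms(1) F_has_derivative]
      by (simp add: inner_commute norm_minus_commute)
    moreover have "?G \<bullet> (z - y) = - (?G \<bullet> (y - z))"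
      by (simp add: inner_diff_right)
    ultimately have "\<mu> / 2 * (norm (y - z))\<^sup>2 \<le> ?G \<bullet> (y - z) - F y + F z"
      by linarith
    then have "2 * \<alpha> * (\<mu> / 2 * (norm (y - z))\<^sup>2) \<le> 2 * \<alpha> * (?G \<bullet> (y - z) - F y + F z)"
      using alpha_pos by (intro mult_left_mono) auto
    then show ?thesis
      using card_batches_pos by (intro mult_left_mono) (auto simp: algebra_simps)
  qed
  finally show ?thesis by (metis pos_divide_le_eq mult.commute card_batches_pos)
qed

lemmas batch_expect_const_batches =
  batch_expect_const[OF finite_batches batches_nonempty[OF B_range(2)]]

lemma batch_expect_dist_nonneg: "0 \<le> batch_expect Bs k (\<lambda>ss. (norm (iterate x0 ss - z))\<^sup>2)"
  using batch_expect_mono[of k Bs "\<lambda>_. 0"] batch_expect_const_batches by (metis zero_le_power2)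

lemma sum_expected_gap_le:
  assumes "1 \<le> c"
  shows "(\<Sum>k<K. batch_expect Bs k (\<lambda>ss. F (iterate x0 ss) - F z))
    \<le> ((norm (x0 - z))\<^sup>2 + real K * (2 * gb * sigma_hat f ell n B z)) / \<alpha>"
proof -
  let ?\<sigma> = "sigma_hat f ell n B z"
  define e where "e k = batch_expect Bs k (\<lambda>ss. (norm (iterate x0 ss - z))\<^sup>2)" for k
  define \<phi> where "\<phi> k = batch_expect Bs k (\<lambda>ss. F (iterate x0 ss) - F z)" for k
  have "e (Suc k) \<le> e k - \<alpha> * \<phi> k + 2 * gb * ?\<sigma>" for k
  proof -
    have "e (Suc k) \<le> batch_expect Bs k (\<lambda>ss. (norm (iterate x0 ss - z))\<^sup>2
        - \<alpha> * (F (iterate x0 ss) - F z) + 2 * gb * ?\<sigma>)"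
      unfolding e_def
      by (rule batch_expect_sps_iter_Suc_le[OF finite_batches expected_step_dist_le[OF assms]])
    also have "\<dots> = e k - \<alpha> * \<phi> k + 2 * gb * ?\<sigma>"
      by (simp add: e_def \<phi>_def batch_expect_add batch_expect_diff batch_expect_cmult
          batch_expect_const_batches)
    finally show ?thesis .
  qed
  then have "(\<Sum>k<K. \<alpha> * \<phi> k) \<le> e 0 + real K * (2 * gb * ?\<sigma>)"
    by (rule sum_le_of_descent) (simp add: e_def batch_expect_dist_nonneg)
  then have "\<alpha> * (\<Sum>k<K. \<phi> k) \<le> (norm (x0 - z))\<^sup>2 + real K * (2 * gb * ?\<sigma>)"
    by (simp add: e_def batch_expect_0 sps_iter_def sum_distrib_left)
  then show ?thesis
    using alpha_pos by (simp add: \<phi>_def pos_le_divide_eq mult.commute)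
qed

theorem convex_rate:
  assumes "1 \<le> c" "1 \<le> K"
  shows "batch_expect Bs K (\<lambda>ss. F ((1 / real K) *\<^sub>R (\<Sum>k<K. iterate x0 (take k ss))) - F z)
    \<le> (norm (x0 - z))\<^sup>2 / (\<alpha> * real K) + 2 * gb * sigma_hat f ell n B z / \<alpha>"
proof -
  have "convex_on UNIV F"
    using fS_convex[of "{..<n}"] by (simp add: fS_full)
  then have "batch_expect Bs K (\<lambda>ss. F ((1 / real K) *\<^sub>R (\<Sum>k<K. iterate x0 (take k ss))))
      \<le> (\<Sum>k<K. batch_expect Bs k (\<lambda>ss. F (iterate x0 ss))) / real K"
    using assms(2) by (intro batch_expect_convex_average_le finite_batches batches_nonempty B_range)
  then have "batch_expect Bs K (\<lambda>ss. F ((1 / real K) *\<^sub>R (\<Sum>k<K. iterate x0 (take k ss))) - F z)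
      \<le> (\<Sum>k<K. batch_expect Bs k (\<lambda>ss. F (iterate x0 ss) - F z)) / real K"
    using assms(2)
    by (simp add: batch_expect_diff batch_expect_const_batches sum_subtractf diff_divide_distrib)
  also have "\<dots> \<le> ((norm (x0 - z))\<^sup>2 + real K * (2 * gb * sigma_hat f ell n B z)) / \<alpha> / real K"
    using sum_expected_gap_le[OF assms(1)] by (rule divide_right_mono) simp
  also have "\<dots> = (norm (x0 - z))\<^sup>2 / (\<alpha> * real K) + 2 * gb * sigma_hat f ell n B z / \<alpha>"
    using assms(2) by (simp add: add_divide_distrib divide_divide_eq_left mult.commute)
  finally show ?thesis .
qed

theorem strongly_convex_rate:
  assumes "0 < \<mu>" "strongly_convex \<mu> F" "1 / 2 \<le> c"
  shows "batch_expect Bs k (\<lambda>ss. (norm (iterate x0 ss - z))\<^sup>2)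
    \<le> (1 - \<mu> * \<alpha>) ^ k * (norm (x0 - z))\<^sup>2 + 2 * gb * sigma_hat f ell n B z / (\<mu> * \<alpha>)"
proof -
  define e where "e k = batch_expect Bs k (\<lambda>ss. (norm (iterate x0 ss - z))\<^sup>2)" for k
  have e_0: "e 0 = (norm (x0 - z))\<^sup>2" by (simp add: e_def batch_expect_0 sps_iter_def)
  have "\<mu> * \<alpha> \<le> 1"
  proof -
    have "\<mu> \<le> Lmax"
      using assms(2) F_has_derivative F_gradient_lipschitz by (rule strongly_convex_modulus_le_lipschitz)
    moreover have "\<alpha> \<le> 1 / Lmax"
    proof -
      have "\<alpha> \<le> 1 / (2 * c * Lmax)" by simp
      also have "\<dots> \<le> 1 / Lmax"
        using assms(3) Lmax_pos by (intro divide_left_mono) auto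
      finally show ?thesis .
    qed
    ultimately have "\<mu> * \<alpha> \<le> Lmax * (1 / Lmax)"
      using assms(1) alpha_pos by (intro mult_mono) auto
    then show ?thesis using Lmax_pos by simp
  qed
  have "e (Suc k) \<le> (1 - \<mu> * \<alpha>) * e k + 2 * gb * sigma_hat f ell n B z" for k
  proof -
    have "e (Suc k) \<le> batch_expect Bs k (\<lambda>ss. (1 - \<mu> * \<alpha>) * (norm (iterate x0 ss - z))\<^sup>2
        + 2 * gb * sigma_hat f ell n B z)"
      unfolding e_def
      by (rule batch_expect_sps_iter_Suc_le[OF finite_batches
            expected_step_dist_le_strongly_convex[OF assms(2,3)]])
    then show ?thesis
      by (simp add: e_def batch_expect_add batch_expect_cmult batch_expect_const_batches)
  qed
  then have "e k \<le> (1 - \<mu> * \<alpha>) ^ k * e 0 + 2 * gb * sigma_hat f ell n B z / (\<mu> * \<alpha>)"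
    using \<open>\<mu> * \<alpha> \<le> 1\<close> assms(1) alpha_pos gb_pos sigma_hat_nonneg by (intro linear_recursion_le) auto
  then show ?thesis by (simp only: e_0) (simp only: e_def)
qed

end

theorem theorem2:
  fixes f :: "nat \<Rightarrow> 'a::euclidean_space \<Rightarrow> real"
    and g :: "nat \<Rightarrow> 'a \<Rightarrow> 'a"
    and L :: "nat \<Rightarrow> real"
    and n B :: nat
    and ell :: "nat set \<Rightarrow> real"
    and c gb :: real
    and x0 xs :: 'a
  defines "F \<equiv> (\<lambda>x. (\<Sum>i<n. f i x) / real n)"
    and "\<alpha> \<equiv> min (1 / (2 * c * Max (L ` {..<n}))) gb"
    and "x \<equiv> sps_iter f g ell c gb x0"
  assumes n_pos: "1 \<le> n"
    and B_range: "1 \<le> B" "B \<le> n"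
    and grad: "\<And>i y. i < n \<Longrightarrow> GDERIV (f i) y :> g i y"
    and convex: "\<And>i. i < n \<Longrightarrow> convex_on UNIV (f i)"
    and L_pos: "\<And>i. i < n \<Longrightarrow> 0 < L i"
    and smooth: "\<And>i y z. i < n \<Longrightarrow> norm (g i y - g i z) \<le> L i * norm (y - z)"
    and fS_bdd: "\<And>S. S \<in> batches n B \<Longrightarrow> bdd_below (range (fS f S))"
    and ell_le: "\<And>S. S \<in> batches n B \<Longrightarrow> ell S \<le> (INF y. fS f S y)"
    and c_pos: "0 < c" and gb_pos: "0 < gb"
    and xs_min: "\<And>y. F xs \<le> F y"
  shows "(c = 1 \<longrightarrow> (\<forall>K\<ge>1.
            batch_expect (batches n B) K
              (\<lambda>ss. F ((1 / real K) *\<^sub>R (\<Sum>k<K. x (take k ss))) - F xs)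
            \<le> (norm (x0 - xs))\<^sup>2 / (\<alpha> * real K) + 2 * gb * sigma_hat f ell n B xs / \<alpha>))
       \<and> (\<forall>\<mu>>0. strongly_convex \<mu> F \<and> 1/2 \<le> c \<longrightarrow> (\<forall>k.
            batch_expect (batches n B) k (\<lambda>ss. (norm (x ss - xs))\<^sup>2)
            \<le> (1 - \<mu> * \<alpha>) ^ k * (norm (x0 - xs))\<^sup>2 + 2 * gb * sigma_hat f ell n B xs / (\<mu> * \<alpha>)))"
proof -
  have "ell S \<le> fS f S y" if "S \<in> batches n B" for S y
    using ell_le[OF that] cINF_lower[OF fS_bdd[OF that]] by (meson UNIV_I order_trans)
  then interpret sps_problem f g L n B ell c gb
    using B_range grad convex L_pos smooth c_pos gb_pos by unfold_locales
  show ?thesis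
    unfolding F_def \<alpha>_def x_def by (intro conjI impI allI convex_rate strongly_convex_rate) auto
qed


end
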